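(* Let $G$ be an abelian group and $\mathbf{z}_0,\dots,\mathbf{z}_t\in G$, with $\mathbf{z}_0$ of finite order $s$. Suppose there are integers $r_0,\dots,r_t$ with $r_n\mathbf{z}_{n+1}=r_{n+1}\mathbf{z}_n$ and $\gcd(r_n,r_{n+1})=1$ for $0\le n\le t-1$. Then for each $1\le n\le t$, the order of $\mathbf{z}_n$ divides $\operatorname{lcm}\{s r_0, r_1,\dots,r_{n-1}\}$. *)

theory Defs
  imports "HOL-Algebra.Algebra"
begin

end

theory Submission
  imports Defs
begin

text \<open>Put \<open>L n = lcm {s r 0, r 1, ..., r (n - 1)}\<close>. The relation
  \<open>z (n+1) ^ r n = z n ^ r (n+1)\<close> gives \<open>ord (z (n+1)) | r n * ord (z n)\<close>, so it suffices
  to show \<open>r n * ord (z n) | L (n+1)\<close> by induction on \<open>n\<close>. For the step write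
  \<open>L (n+2) = r (n+1) * m\<close>; a Bezout identity \<open>u r n + v r (n+1) = 1\<close> splits \<open>z (n+1) ^ m\<close>
  into \<open>z n ^ (u L (n+2))\<close> and \<open>z (n+1) ^ (v L (n+2))\<close>, both trivial by the induction
  hypothesis.\<close>

lemma (in group) ord_dvd_mult_ord_of_int_pow_eq:
  assumes "x \<in> carrier G" "y \<in> carrier G" "x [^] (a::int) = y [^] (b::int)"
  shows "int (ord x) dvd a * int (ord y)"
proof -
  have "x [^] (a * int (ord y)) = (y [^] b) [^] int (ord y)"
    by (metis assms(1,3) int_pow_pow)
  also have "\<dots> = (y [^] int (ord y)) [^] b"
    using assms(2) by (simp add: int_pow_pow mult.commute)
  also have "\<dots> = \<one>"
    using assms(2) by (simp add: int_pow_int pow_ord_eq_1)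
  finally show ?thesis
    using assms(1) int_pow_eq_id by blast
qed

lemma (in group) mult_ord_dvd_of_coprime_int_pow_eq:
  assumes "x \<in> carrier G" "y \<in> carrier G" "x [^] (a::int) = y [^] (b::int)" "coprime a b"
    and "int (ord x) dvd L" "int (ord y) dvd L" "b dvd L"
  shows "b * int (ord x) dvd L"
proof -
  obtain m where L: "L = b * m"
    using assms(7) by blast
  obtain u v where uv: "u * a + v * b = 1"
    using assms(4) bezout_int[of a b] by (auto simp: coprime_iff_gcd_eq_1)
  have "m = m * (u * a + v * b)"
    by (simp add: uv)
  also have "\<dots> = a * (u * m) + v * L"
    by (simp add: L algebra_simps)
  finally have "x [^] m = (x [^] a) [^] (u * m) \<otimes> x [^] (v * L)"
    using assms(1) by (metis int_pow_mult int_pow_pow)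
  also have "(x [^] a) [^] (u * m) = y [^] (u * L)"
    using assms(2,3) by (simp add: int_pow_pow L ac_simps)
  also have "y [^] (u * L) = \<one>"
    using assms(2,6) by (simp add: int_pow_eq_id)
  also have "x [^] (v * L) = \<one>"
    using assms(1,5) by (simp add: int_pow_eq_id)
  finally have "int (ord x) dvd m"
    using assms(1) int_pow_eq_id by simp
  then show ?thesis
    by (simp add: L)
qed

theorem lemma3p3:
  fixes G :: "('a, 'b) monoid_scheme" and z :: "nat \<Rightarrow> 'a" and r :: "nat \<Rightarrow> int"
    and t s :: nat
  assumes "comm_group G"
    and "\<And>n. n \<le> t \<Longrightarrow> z n \<in> carrier G"
    and "group.ord G (z 0) = s" and "s \<noteq> 0"
    and "\<And>n. n < t \<Longrightarrow> z (Suc n) [^]\<^bsub>G\<^esub> (r n) = z n [^]\<^bsub>G\<^esub> (r (Suc n))"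
    and "\<And>n. n < t \<Longrightarrow> gcd (r n) (r (Suc n)) = 1"
  shows "\<And>n. 1 \<le> n \<Longrightarrow> n \<le> t \<Longrightarrow>
           int (group.ord G (z n)) dvd Lcm (insert (int s * r 0) (r ` {1..<n}))"
proof -
  interpret comm_group G by fact
  define L where "L n = Lcm (insert (int s * r 0) (r ` {1..<n}))" for n
  have L_Suc: "L (Suc n) = lcm (L n) (r n)" if "1 \<le> n" for n
  proof -
    have "{1..<Suc n} = insert n {1..<n}"
      using that by auto
    then show ?thesis
      by (simp add: L_def insert_commute lcm.commute)
  qed
  have ord_step: "int (ord (z (Suc n))) dvd r n * int (ord (z n))" if "n < t" for n
    using that assms(2,5) by (simp add: ord_dvd_mult_ord_of_int_pow_eq)
  have invariant: "r n * int (ord (z n)) dvd L (Suc n)" if "n < t" for n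
    using that
  proof (induction n)
    case 0
    then show ?case
      by (simp add: L_def assms(3) mult.commute)
  next
    case (Suc n)
    have "r n * int (ord (z n)) dvd L (Suc (Suc n))"
      using Suc L_Suc[of "Suc n"] by (simp add: dvd_trans)
    then show ?case
      using Suc.prems assms(2,5,6) L_Suc[of "Suc n"] ord_step[of n]
      by (intro mult_ord_dvd_of_coprime_int_pow_eq[of "z (Suc n)" "z n" "r n"])
        (auto simp: coprime_iff_gcd_eq_1 intro: dvd_trans dvd_mult_right)
  qed
  fix n assume "1 \<le> n" "n \<le> t"
  then obtain k where "n = Suc k" "k < t"
    by (cases n) auto
  then show "int (ord (z n)) dvd Lcm (insert (int s * r 0) (r ` {1..<n}))"
    using ord_step[of k] invariant[of k] by (auto simp: L_def intro: dvd_trans)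
qed

end
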